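(* Let $\sigma$ be an $(\alpha,\beta)$-ReLU activation applied entrywise. For every $h\in\mathbb R^n$, $\mathrm{Dir}(\sigma(h))+\mathrm{Dir}(\sigma(-h))\le(\alpha^2+\beta^2)\,\mathrm{Dir}(h)$.
   Context: An activation $\sigma:\mathbb R\to\mathbb R$ is $(\alpha,\beta)$-ReLU if $\sigma(x)=\alpha x$ for $x\ge0$ and $\sigma(x)=\beta x$ for $x<0$, where $\alpha,\beta\ge0$ are not both $0$. Let $\mathcal G=(\mathcal V,\mathcal E)$ be a finite undirected graph with $n$ nodes, adjacency matrix $A$, degree matrix $D=\mathrm{diag}(A\mathbf 1_n)$ with degrees $d_i$, $\tilde A=A+I$, $\tilde D=D+I$, $\hat A=\tilde D^{-1/2}\tilde A\tilde D^{-1/2}$, $\hat L=I-\hat A$. For $x\in\mathbb R^n$, $\mathrm{Dir}(x)=x^\top\hat Lx=\sum_{\{i,j\}\in\mathcal E}(x_i/\sqrt{1+d_i}-x_j/\sqrt{1+d_j})^2$. *)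

theory Defs
  imports "HOL-Analysis.Analysis"
begin

definition relu_ab :: "real \<Rightarrow> real \<Rightarrow> real \<Rightarrow> real" where
  "relu_ab \<alpha> \<beta> x = (if x \<ge> 0 then \<alpha> * x else \<beta> * x)"

definition is_ab_relu :: "real \<Rightarrow> real \<Rightarrow> (real \<Rightarrow> real) \<Rightarrow> bool" where
  "is_ab_relu \<alpha> \<beta> \<sigma> \<longleftrightarrow> \<alpha> \<ge> 0 \<and> \<beta> \<ge> 0 \<and> \<not> (\<alpha> = 0 \<and> \<beta> = 0) \<and> \<sigma> = relu_ab \<alpha> \<beta>"

definition vmap :: "(real \<Rightarrow> real) \<Rightarrow> real^'n \<Rightarrow> real^'n" where
  "vmap \<sigma> x = (\<chi> i. \<sigma> (x $ i))"

definition is_adjacency :: "real^'n^'n \<Rightarrow> bool" where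
  "is_adjacency A \<longleftrightarrow> (\<forall>i j. A $ i $ j = A $ j $ i) \<and> (\<forall>i. A $ i $ i = 0)
     \<and> (\<forall>i j. A $ i $ j = 0 \<or> A $ i $ j = 1)"

definition degree :: "real^'n^'n \<Rightarrow> 'n \<Rightarrow> real" where
  "degree A i = (\<Sum>j\<in>UNIV. A $ i $ j)"

text \<open>\<hat>A = (D+I)^(-1/2) (A+I) (D+I)^(-1/2), and \<hat>L = I - \<hat>A.\<close>
definition norm_adj :: "real^'n^'n \<Rightarrow> real^'n^'n" where
  "norm_adj A = (\<chi> i j. (A $ i $ j + (if i = j then 1 else 0))
                   / (sqrt (1 + degree A i) * sqrt (1 + degree A j)))"

definition norm_lap :: "real^'n^'n \<Rightarrow> real^'n^'n" where
  "norm_lap A = mat 1 - norm_adj A"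

definition Dir :: "real^'n^'n \<Rightarrow> real^'n \<Rightarrow> real" where
  "Dir A x = x \<bullet> (norm_lap A *v x)"

end

theory Submission
  imports Defs
begin

text \<open>For a symmetric nonnegative \<open>A\<close>, the Dirichlet energy is the weighted sum
  \<open>\<Sum>\<^sub>i\<^sub>j A\<^sub>i\<^sub>j (y\<^sub>i - y\<^sub>j)\<^sup>2 / 2\<close> of the degree-rescaled coordinates \<open>y\<^sub>i = x\<^sub>i / sqrt (1 + d\<^sub>i)\<close>.
  The ReLU commutes with this positive rescaling, so the theorem reduces edge by edge to the
  scalar inequality \<open>(\<sigma> a - \<sigma> b)\<^sup>2 + (\<sigma> (-a) - \<sigma> (-b))\<^sup>2 \<le> (\<alpha>\<^sup>2 + \<beta>\<^sup>2) (a - b)\<^sup>2\<close>, which holds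
  for all real \<open>\<alpha>\<close>, \<open>\<beta>\<close>.\<close>

lemma relu_ab_uminus: "relu_ab \<alpha> \<beta> (- x) = - relu_ab \<beta> \<alpha> x"
  by (simp add: relu_ab_def)

lemma relu_ab_eq_max_min: "relu_ab \<alpha> \<beta> x = \<alpha> * max x 0 + \<beta> * min x 0"
  by (simp add: relu_ab_def)

lemma relu_ab_divide_pos:
  assumes "s > 0"
  shows "relu_ab \<alpha> \<beta> (x / s) = relu_ab \<alpha> \<beta> x / s"
  using assms by (simp add: relu_ab_def zero_le_divide_iff)

text \<open>Split \<open>a - b = p + q\<close> into the increments \<open>p\<close>, \<open>q\<close> of the positive and negative parts.
  Both parts are monotone, so \<open>p q \<ge> 0\<close>, and the claimed inequality is the identity
  \<open>RHS - LHS = 2 p q (\<alpha> - \<beta>)\<^sup>2\<close>.\<close>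
lemma relu_ab_diff_sq_le:
  fixes \<alpha> \<beta> a b :: real
  shows "(relu_ab \<alpha> \<beta> a - relu_ab \<alpha> \<beta> b)\<^sup>2 + (relu_ab \<alpha> \<beta> (- a) - relu_ab \<alpha> \<beta> (- b))\<^sup>2
         \<le> (\<alpha>\<^sup>2 + \<beta>\<^sup>2) * (a - b)\<^sup>2"
proof -
  define p where "p = max a 0 - max b 0"
  define q where "q = min a 0 - min b 0"
  have "a - b = p + q"
    by (simp add: p_def q_def)
  have "0 \<le> p * q"
    unfolding p_def q_def by (cases "a \<le> b") (auto intro: mult_nonneg_nonneg mult_nonpos_nonpos)
  have "relu_ab \<alpha> \<beta> a - relu_ab \<alpha> \<beta> b = \<alpha> * p + \<beta> * q"
    by (simp add: relu_ab_eq_max_min p_def q_def algebra_simps)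
  moreover have "relu_ab \<alpha> \<beta> (- a) - relu_ab \<alpha> \<beta> (- b) = - (\<beta> * p + \<alpha> * q)"
    unfolding relu_ab_uminus unfolding relu_ab_eq_max_min p_def q_def by (simp add: algebra_simps)
  moreover have "(\<alpha>\<^sup>2 + \<beta>\<^sup>2) * (p + q)\<^sup>2 - ((\<alpha> * p + \<beta> * q)\<^sup>2 + (- (\<beta> * p + \<alpha> * q))\<^sup>2)
      = 2 * (p * q) * (\<alpha> - \<beta>)\<^sup>2"
    by (simp add: power2_eq_square algebra_simps)
  moreover have "0 \<le> 2 * (p * q) * (\<alpha> - \<beta>)\<^sup>2"
    using \<open>0 \<le> p * q\<close> by simp
  ultimately show ?thesis
    using \<open>a - b = p + q\<close> by simp
qed

lemma sum_symmetric_weighted_sq_diff: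
  fixes W :: "'n::finite \<Rightarrow> 'n \<Rightarrow> real" and y :: "'n \<Rightarrow> real"
  assumes "\<And>i j. W i j = W j i"
  shows "(\<Sum>i\<in>UNIV. \<Sum>j\<in>UNIV. W i j * (y i - y j)\<^sup>2)
       = 2 * (\<Sum>i\<in>UNIV. \<Sum>j\<in>UNIV. W i j * (y i * y i - y i * y j))"
proof -
  have swap: "(\<Sum>i\<in>UNIV. \<Sum>j\<in>UNIV. W i j * (y j * y j)) = (\<Sum>i\<in>UNIV. \<Sum>j\<in>UNIV. W i j * (y i * y i))"
    by (subst sum.swap) (simp add: assms)
  have "(\<Sum>i\<in>UNIV. \<Sum>j\<in>UNIV. W i j * (y i - y j)\<^sup>2)
      = (\<Sum>i\<in>UNIV. \<Sum>j\<in>UNIV. W i j * (y i * y i)) + (\<Sum>i\<in>UNIV. \<Sum>j\<in>UNIV. W i j * (y j * y j))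
        - 2 * (\<Sum>i\<in>UNIV. \<Sum>j\<in>UNIV. W i j * (y i * y j))"
    by (simp add: power2_eq_square algebra_simps sum.distrib sum_subtractf sum_distrib_left)
  then show ?thesis
    by (simp add: swap right_diff_distrib sum_subtractf)
qed

lemma degree_nonneg:
  fixes A :: "real^'n^'n"
  assumes "\<And>i j. 0 \<le> A $ i $ j"
  shows "0 \<le> degree A i"
  unfolding degree_def by (intro sum_nonneg assms)

lemma is_adjacency_symmetric: "is_adjacency A \<Longrightarrow> A $ i $ j = A $ j $ i"
  by (simp add: is_adjacency_def)

lemma is_adjacency_nonneg: "is_adjacency A \<Longrightarrow> 0 \<le> A $ i $ j"
  unfolding is_adjacency_def by (metis order_refl zero_le_one)

lemma Dir_eq_sum_sq_diff:
  fixes A :: "real^'n^'n" and x :: "real^'n"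
  assumes sym: "\<And>i j. A $ i $ j = A $ j $ i" and nonneg: "\<And>i j. 0 \<le> A $ i $ j"
  defines "y \<equiv> \<lambda>i. x $ i / sqrt (1 + degree A i)"
  shows "Dir A x = (\<Sum>i\<in>UNIV. \<Sum>j\<in>UNIV. A $ i $ j * (y i - y j)\<^sup>2) / 2"
proof -
  define s where "s i = sqrt (1 + degree A i)" for i
  have s_pos: "0 < s i" and s_sq: "s i * s i = 1 + degree A i" for i
    using degree_nonneg[OF nonneg, of i] by (simp_all add: s_def)
  have x_eq: "x $ i = s i * y i" for i
    using s_pos[of i] by (simp add: y_def s_def)
  have row: "(\<Sum>j\<in>UNIV. x $ i * (norm_lap A $ i $ j * x $ j))
      = (\<Sum>j\<in>UNIV. A $ i $ j * (y i * y i - y i * y j))" for i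
  proof -
    have "(\<Sum>j\<in>UNIV. x $ i * (norm_lap A $ i $ j * x $ j))
        = (\<Sum>j\<in>UNIV. (if i = j then degree A i * (y i * y i) else 0) - A $ i $ j * (y i * y j))"
    proof (rule sum.cong[OF refl])
      fix j
      have "x $ i * (norm_lap A $ i $ j * x $ j)
          = (if i = j then s i * s j - 1 else 0) * (y i * y j) - A $ i $ j * (y i * y j)"
        unfolding norm_lap_def norm_adj_def s_def[symmetric] using s_pos[of i] s_pos[of j]
        by (simp add: mat_def x_eq field_simps)
      then show "x $ i * (norm_lap A $ i $ j * x $ j)
          = (if i = j then degree A i * (y i * y i) else 0) - A $ i $ j * (y i * y j)"
        by (simp add: s_sq)
    qed
    also have "\<dots> = (\<Sum>j\<in>UNIV. A $ i $ j * (y i * y i - y i * y j))"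
      by (simp add: sum_subtractf degree_def sum_distrib_right right_diff_distrib)
    finally show ?thesis .
  qed
  have "Dir A x = (\<Sum>i\<in>UNIV. \<Sum>j\<in>UNIV. A $ i $ j * (y i * y i - y i * y j))"
    by (simp add: Dir_def inner_vec_def matrix_vector_mult_def sum_distrib_left row)
  then show ?thesis
    by (simp add: sum_symmetric_weighted_sq_diff[where W = "\<lambda>i j. A $ i $ j"] sym)
qed

theorem mainTheorem12:
  fixes A :: "real^'n^'n" and \<sigma> :: "real \<Rightarrow> real" and \<alpha> \<beta> :: real and h :: "real^'n"
  assumes "is_adjacency A"
    and "is_ab_relu \<alpha> \<beta> \<sigma>"
  shows "Dir A (vmap \<sigma> h) + Dir A (vmap \<sigma> (- h)) \<le> (\<alpha>\<^sup>2 + \<beta>\<^sup>2) * Dir A h"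
proof -
  note sym = is_adjacency_symmetric[OF assms(1)] and nonneg = is_adjacency_nonneg[OF assms(1)]
  define s where "s i = sqrt (1 + degree A i)" for i
  define y where "y i = h $ i / s i" for i
  have \<sigma>: "\<sigma> = relu_ab \<alpha> \<beta>"
    using assms(2) by (simp add: is_ab_relu_def)
  have scale: "vmap \<sigma> x $ i / s i = \<sigma> (x $ i / s i)" for x i
    using degree_nonneg[OF nonneg, of i] by (simp add: vmap_def \<sigma> s_def relu_ab_divide_pos)
  have "Dir A (vmap \<sigma> h) + Dir A (vmap \<sigma> (- h))
      = (\<Sum>i\<in>UNIV. \<Sum>j\<in>UNIV. A $ i $ j *
           ((\<sigma> (y i) - \<sigma> (y j))\<^sup>2 + (\<sigma> (- y i) - \<sigma> (- y j))\<^sup>2)) / 2"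
    by (simp add: Dir_eq_sum_sq_diff[OF sym nonneg] s_def[symmetric] scale y_def sum.distrib
        distrib_left add_divide_distrib)
  also have "\<dots> \<le> (\<Sum>i\<in>UNIV. \<Sum>j\<in>UNIV. A $ i $ j * ((\<alpha>\<^sup>2 + \<beta>\<^sup>2) * (y i - y j)\<^sup>2)) / 2"
    unfolding \<sigma> by (intro divide_right_mono sum_mono mult_left_mono relu_ab_diff_sq_le nonneg) simp
  also have "\<dots> = (\<alpha>\<^sup>2 + \<beta>\<^sup>2) * Dir A h"
    by (simp add: Dir_eq_sum_sq_diff[OF sym nonneg] s_def[symmetric] y_def sum_distrib_left
        algebra_simps)
  finally show ?thesis .
qed

end
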